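(* Consider the GBDF4 coefficients $(a_0,\dots,a_3)=\big(\tfrac{2\beta^3+9\beta^2+11\beta+3}{12},\tfrac{-6\beta^3-21\beta^2-9\beta+13}{12},\tfrac{6\beta^3+15\beta^2-3\beta-5}{12},\tfrac{-2\beta^3-3\beta^2+\beta+1}{12}\big)$, $(b_0,\dots,b_4)=\big(\tfrac{\beta^3+3\beta^2+2\beta}{6},\tfrac{-\beta^3-2\beta^2+\beta+2}{2},\tfrac{\beta^3+\beta^2-2\beta}{2},\tfrac{\beta-\beta^3}{6},0\big)$, $(c_0,\dots,c_3)=\big(\tfrac{\beta^3+6\beta^2+11\beta+6}{6},\tfrac{-\beta^3-5\beta^2-6\beta}{2},\tfrac{\beta^3+4\beta^2+3\beta}{2},\tfrac{-\beta^3-3\beta^2-2\beta}{6}\big)$. For $\beta\ge1$, $$\sigma_{\mathrm{F}}\ge1,\quad\sigma_{\mathrm{E}}\ge\frac{4\beta^3+18\beta^2+20\beta+3}{4(\beta^3+3\beta^2+\beta-1)},\quad\lambda_{\mathrm{I}}\le\frac{4\beta^3+6\beta^2-4\beta-3}{4(\beta^3+3\beta^2+\beta-1)},$$ so that $\mathfrak{I}_{\mathrm{IE}}\le\dfrac{4\beta^3+6\beta^2-4\beta-3}{4\beta^3+18\beta^2+20\beta+3}$. If $\beta=9$, then $\sigma_{\mathrm{F}}\le\frac{49}{45}$, $\sigma_{\mathrm{E}}\le\frac{2319}{1960}$, $\lambda_{\mathrm{I}}\ge\frac{1641}{1960}$, so that $\mathfrak{I}_{\mathrm{IE}}\ge\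frac{547}{773}$.
   Context: For coefficient vectors $(a_j)_{j=0}^{\mathrm{k}-1}$, $(b_j)_{j=0}^{\mathrm{k}}$, $(c_j)_{j=0}^{\mathrm{k}-1}$ define $a(\theta)=\sum_j a_je^{\imath j\theta}$, $b(\theta)=\sum_j b_je^{\imath j\theta}$, $c(\theta)=\sum_jc_je^{\imath j\theta}$ and $\sigma_{\mathrm{F}}=\max_{\theta\in[0,2\pi)}|1/a(\theta)|$, $\sigma_{\mathrm{E}}=\max_{\theta\in[0,2\pi)}|c(\theta)/a(\theta)|$, $\lambda_{\mathrm{I}}=\min_{\theta\in[0,2\pi)}\Re[b(\theta)/a(\theta)]$, $\mathfrak{I}_{\mathrm{IE}}=\lambda_{\mathrm{I}}/\sigma_{\mathrm{E}}$. Here $\mathrm{k}=4$. *)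

theory Defs
  imports "HOL-Analysis.Analysis"
begin

definition trig_poly :: "real list \<Rightarrow> real \<Rightarrow> complex" where
  "trig_poly cs \<theta> = (\<Sum>j<length cs. complex_of_real (cs ! j) * exp (\<i> * of_nat j * of_real \<theta>))"

definition sigma_F :: "real list \<Rightarrow> real" where
  "sigma_F a = (SUP \<theta>\<in>{0..<2*pi}. cmod (1 / trig_poly a \<theta>))"

definition sigma_E :: "real list \<Rightarrow> real list \<Rightarrow> real" where
  "sigma_E a c = (SUP \<theta>\<in>{0..<2*pi}. cmod (trig_poly c \<theta> / trig_poly a \<theta>))"

definition lambda_I :: "real list \<Rightarrow> real list \<Rightarrow> real" where
  "lambda_I a b = (INF \<theta>\<in>{0..<2*pi}. Re (trig_poly b \<theta> / trig_poly a \<theta>))"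

definition I_IE :: "real list \<Rightarrow> real list \<Rightarrow> real list \<Rightarrow> real" where
  "I_IE a b c = lambda_I a b / sigma_E a c"

definition gbdf4_a :: "real \<Rightarrow> real list" where
  "gbdf4_a \<beta> = [(2*\<beta>^3 + 9*\<beta>^2 + 11*\<beta> + 3)/12,
                 (-6*\<beta>^3 - 21*\<beta>^2 - 9*\<beta> + 13)/12,
                 (6*\<beta>^3 + 15*\<beta>^2 - 3*\<beta> - 5)/12,
                 (-2*\<beta>^3 - 3*\<beta>^2 + \<beta> + 1)/12]"

definition gbdf4_b :: "real \<Rightarrow> real list" where
  "gbdf4_b \<beta> = [(\<beta>^3 + 3*\<beta>^2 + 2*\<beta>)/6,
                 (-(\<beta>^3) - 2*\<beta>^2 + \<beta> + 2)/2,
                 (\<beta>^3 + \<beta>^2 - 2*\<beta>)/2,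
                 (\<beta> - \<beta>^3)/6,
                 0]"

definition gbdf4_c :: "real \<Rightarrow> real list" where
  "gbdf4_c \<beta> = [(\<beta>^3 + 6*\<beta>^2 + 11*\<beta> + 6)/6,
                 (-(\<beta>^3) - 5*\<beta>^2 - 6*\<beta>)/2,
                 (\<beta>^3 + 4*\<beta>^2 + 3*\<beta>)/2,
                 (-(\<beta>^3) - 3*\<beta>^2 - 2*\<beta>)/6]"

end

theory Submission
  imports Defs
begin

(* With x = cos t, a trigonometric polynomial of degree 3 has real part P(x) and imaginary part
   sin t * Q(x), so |a(t)|^2, |c(t)|^2 and Re (b(t) * cnj (a(t))) are polynomials in cos t.
   For beta >= 1, |a(t)|^2 = 1 + y/6 - q y^2 + p y^3 with y = 1 - cos t >= 0, and AM-GM on the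
   cubic part gives |a(t)| >= 1/3; hence the suprema and the infimum range over bounded sets, and
   evaluating at t = 0 (where a = 1) and at t = pi gives the bounds for general beta.  For beta = 9
   the three estimates are polynomial inequalities in y >= 0, each certified by writing the
   difference as (y - r)^2 (k y + e) + f y + g with k, e, f, g >= 0. *)

(* cos (j t) = T_j (cos t) and sin (j t) = sin t * U_(j-1) (cos t) for Chebyshev T_j, U_j. *)
definition cos_poly :: "real list \<Rightarrow> real \<Rightarrow> real" where
  "cos_poly cs x = cs!0 + cs!1 * x + cs!2 * (2*x^2 - 1) + cs!3 * (4*x^3 - 3*x)"

definition sin_poly :: "real list \<Rightarrow> real \<Rightarrow> real" where
  "sin_poly cs x = cs!1 + 2 * cs!2 * x + cs!3 * (4*x^2 - 1)"

definition cheb_inner :: "real list \<Rightarrow> real list \<Rightarrow> real \<Rightarrow> real" where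
  "cheb_inner cs ds x = cos_poly cs x * cos_poly ds x + (1 - x^2) * (sin_poly cs x * sin_poly ds x)"

lemma trig_poly_append_zero: "trig_poly (cs @ [0]) = trig_poly cs"
  by (simp add: fun_eq_iff trig_poly_def nth_append)

lemma trig_poly_0: "trig_poly cs 0 = of_real (sum_list cs)"
  by (simp add: trig_poly_def sum_list_sum_nth atLeast0LessThan)

lemma norm_trig_poly_le: "cmod (trig_poly cs t) \<le> (\<Sum>j<length cs. \<bar>cs!j\<bar>)"
  unfolding trig_poly_def
  by (rule order_trans[OF norm_sum]) (simp add: norm_mult norm_exp_eq_Re)

lemma sin_times_3: "sin (x * 3) = sin x * (4 * (cos x)^2 - (1::real))"
proof -
  have "sin (x * 3) = sin (2 * x + x)" by (simp add: algebra_simps)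
  then show ?thesis
    unfolding sin_add sin_double cos_double using sin_cos_squared_add[of x] by algebra
qed

lemma trig_poly_length_4:
  assumes "length cs = 4"
  shows "trig_poly cs t = Complex (cos_poly cs (cos t)) (sin t * sin_poly cs (cos t))"
proof -
  obtain a0 a1 a2 a3 where cs: "cs = [a0, a1, a2, a3]"
    using assms by (auto simp: numeral_eq_Suc length_Suc_conv)
  have multiple_angle: "cos (t * 2) = 2 * (cos t)^2 - 1" "sin (t * 2) = 2 * sin t * cos t"
    "cos (t * 3) = 4 * (cos t)^3 - 3 * cos t"
    using cos_double_cos[of t] sin_double[of t] cos_treble_cos[of t] by (simp_all add: mult.commute)
  show ?thesis
    unfolding trig_poly_def cs cos_poly_def sin_poly_def
    by (simp add: numeral_eq_Suc complex_eq_iff Re_exp Im_exp multiple_angle sin_times_3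
        algebra_simps)
qed

lemma trig_poly_pi: "length cs = 4 \<Longrightarrow> trig_poly cs pi = of_real (cos_poly cs (-1))"
  by (simp add: trig_poly_length_4 complex_eq_iff)

lemma norm_trig_poly_squared:
  "length cs = 4 \<Longrightarrow> (cmod (trig_poly cs t))^2 = cheb_inner cs cs (cos t)"
  by (simp add: trig_poly_length_4 cmod_power2 cheb_inner_def sin_squared_eq power_mult_distrib
      flip: power2_eq_square)

lemma Re_trig_poly_divide:
  assumes "length cs = 4" "length ds = 4"
  shows "Re (trig_poly ds t / trig_poly cs t) = cheb_inner ds cs (cos t) / (cmod (trig_poly cs t))^2"
proof -
  have sin_sq: "1 - (cos t)^2 = sin t * sin t" using sin_squared_eq[of t] by (simp add: power2_eq_square)
  show ?thesis
    unfolding Re_divide' assms[THEN trig_poly_length_4] cheb_inner_def sin_sq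
    by (simp add: algebra_simps)
qed

lemma trig_poly_one: "trig_poly [1] t = 1"
  by (simp add: trig_poly_def)

lemma sigma_F_eq_sigma_E: "sigma_F a = sigma_E a [1]"
  by (simp add: sigma_F_def sigma_E_def trig_poly_one)

lemma norm_divide_le_sigma_E:
  assumes "0 < m" "\<And>t. m \<le> cmod (trig_poly a t)" "\<theta> \<in> {0..<2*pi}"
  shows "cmod (trig_poly c \<theta> / trig_poly a \<theta>) \<le> sigma_E a c"
  unfolding sigma_E_def
proof (rule cSUP_upper[OF assms(3)], rule bdd_aboveI2)
  fix t
  show "cmod (trig_poly c t / trig_poly a t) \<le> (\<Sum>j<length c. \<bar>c!j\<bar>) / m"
    unfolding norm_divide by (rule frac_le[OF _ norm_trig_poly_le assms(1,2)]) (simp add: sum_nonneg)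
qed

lemma lambda_I_le_Re_divide:
  assumes "0 < m" "\<And>t. m \<le> cmod (trig_poly a t)" "\<theta> \<in> {0..<2*pi}"
  shows "lambda_I a b \<le> Re (trig_poly b \<theta> / trig_poly a \<theta>)"
  unfolding lambda_I_def
proof (rule cINF_lower[OF _ assms(3)], rule bdd_belowI2)
  fix t
  have "cmod (trig_poly b t / trig_poly a t) \<le> (\<Sum>j<length b. \<bar>b!j\<bar>) / m"
    unfolding norm_divide by (rule frac_le[OF _ norm_trig_poly_le assms(1,2)]) (simp add: sum_nonneg)
  then show "- ((\<Sum>j<length b. \<bar>b!j\<bar>) / m) \<le> Re (trig_poly b t / trig_poly a t)"
    using abs_Re_le_cmod[of "trig_poly b t / trig_poly a t"] by linarith
qed

lemma sigma_E_le:
  assumes "\<And>\<theta>. \<theta> \<in> {0..<2*pi} \<Longrightarrow> cmod (trig_poly c \<theta> / trig_poly a \<theta>) \<le> K"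
  shows "sigma_E a c \<le> K"
  unfolding sigma_E_def using assms by (intro cSUP_least) simp_all

lemma lambda_I_ge:
  assumes "\<And>\<theta>. \<theta> \<in> {0..<2*pi} \<Longrightarrow> L \<le> Re (trig_poly b \<theta> / trig_poly a \<theta>)"
  shows "L \<le> lambda_I a b"
  unfolding lambda_I_def using assms by (intro cINF_greatest) simp_all

lemma I_IE_le:
  assumes "lambda_I a b \<le> L" "S \<le> sigma_E a c" "0 < S" "0 \<le> L"
  shows "I_IE a b c \<le> L / S"
proof (cases "lambda_I a b \<le> 0")
  case True
  then have "I_IE a b c \<le> 0"
    unfolding I_IE_def using assms(2,3) by (simp add: divide_nonpos_pos)
  also have "0 \<le> L / S" using assms(3,4) by simp
  finally show ?thesis .
qed (use assms in \<open>auto simp: I_IE_def intro: frac_le\<close>)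

lemma I_IE_ge:
  assumes "L \<le> lambda_I a b" "sigma_E a c \<le> S" "0 < sigma_E a c" "0 \<le> L"
  shows "L / S \<le> I_IE a b c"
  unfolding I_IE_def using assms by (intro frac_le) auto

lemma cubic_lower_bound:
  fixes p q s y :: real
  assumes "0 \<le> y" "0 \<le> q" "0 < s" "2 * q \<le> 3 * s * p"
  shows "q * y^2 \<le> p * y^3 + q * s^2 / 3"
proof -
  have "2*y^3 + s^3 - 3 * s * y^2 = (y - s)^2 * (2*y + s)" by algebra
  also have "\<dots> \<ge> 0" using assms(1,3) by simp
  finally have "3 * s * y^2 \<le> 2*y^3 + s^3" by simp
  then have "q * (3 * s * y^2) \<le> q * (2*y^3 + s^3)" using assms(2) by (rule mult_left_mono)
  then have "q * y^2 \<le> (2*q / (3 * s)) * y^3 + q * s^2 / 3"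
    using assms(3) by (simp add: field_simps power2_eq_square power3_eq_cube)
  also have "\<dots> \<le> p * y^3 + q * s^2 / 3"
    using assms by (intro add_right_mono mult_right_mono) (simp_all add: field_simps)
  finally show ?thesis .
qed

lemma length_gbdf4:
  "length (gbdf4_a \<beta>) = 4" "length (butlast (gbdf4_b \<beta>)) = 4" "length (gbdf4_c \<beta>) = 4"
  by (simp_all add: gbdf4_a_def gbdf4_b_def gbdf4_c_def)

lemma trig_poly_gbdf4_b: "trig_poly (gbdf4_b \<beta>) = trig_poly (butlast (gbdf4_b \<beta>))"
proof -
  have "gbdf4_b \<beta> = butlast (gbdf4_b \<beta>) @ [0]" by (simp add: gbdf4_b_def)
  then show ?thesis by (metis trig_poly_append_zero)
qed

lemma gbdf4_values:
  "sum_list (gbdf4_a \<beta>) = 1"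
  "cos_poly (gbdf4_a \<beta>) (-1) = 4*(\<beta>^3 + 3*\<beta>^2 + \<beta> - 1)/3"
  "cos_poly (butlast (gbdf4_b \<beta>)) (-1) = (4*\<beta>^3 + 6*\<beta>^2 - 4*\<beta> - 3)/3"
  "cos_poly (gbdf4_c \<beta>) (-1) = (4*\<beta>^3 + 18*\<beta>^2 + 20*\<beta> + 3)/3"
  by (simp_all add: gbdf4_a_def gbdf4_b_def gbdf4_c_def cos_poly_def field_simps)

lemma gbdf4_a_norm_squared:
  "cheb_inner (gbdf4_a \<beta>) (gbdf4_a \<beta>) x = 1 + (1 - x)/6
     - (\<beta>^4 + 4*\<beta>^3 + 3*\<beta>^2 - 2*\<beta> - 4/3)/3 * (1 - x)^2
     + (4*\<beta>^6 + 24*\<beta>^5 + 47*\<beta>^4 + 28*\<beta>^3 - 11*\<beta>^2 - 14*\<beta> - 3)/18 * (1 - x)^3"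
  unfolding cheb_inner_def power2_eq_square[symmetric] cos_poly_def sin_poly_def gbdf4_a_def
  by (simp add: field_simps) algebra

lemma gbdf4_a_norm_ge:
  assumes "1 \<le> \<beta>"
  shows "1/3 \<le> cmod (trig_poly (gbdf4_a \<beta>) t)"
proof -
  define q where "q = (\<beta>^4 + 4*\<beta>^3 + 3*\<beta>^2 - 2*\<beta> - 4/3)/3"
  define p where "p = (4*\<beta>^6 + 24*\<beta>^5 + 47*\<beta>^4 + 28*\<beta>^3 - 11*\<beta>^2 - 14*\<beta> - 3)/18"
  define y where "y = 1 - cos t"
  have pow: "\<beta> \<le> \<beta>^2" "\<beta>^2 \<le> \<beta>^3" "\<beta>^3 \<le> \<beta>^4" "\<beta>^4 \<le> \<beta>^5"
    using power_increasing[OF _ assms, of 1 2] power_increasing[OF _ assms, of 2 3]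
      power_increasing[OF _ assms, of 3 4] power_increasing[OF _ assms, of 4 5] by simp_all
  have q3: "3 * q = \<beta>^4 + 4*\<beta>^3 + 3*\<beta>^2 - 2*\<beta> - 4/3" by (simp add: q_def)
  have "0 \<le> q" using q3 assms pow by linarith
  have "3 * p - 2 * q * \<beta>^2 = (24*\<beta>^5 + 105*\<beta>^4 + 108*\<beta>^3 - 17*\<beta>^2 - 42*\<beta> - 9)/18"
    unfolding p_def q_def by (simp add: field_simps) algebra
  also have "\<dots> \<ge> 0" using assms pow by (intro divide_nonneg_pos) linarith+
  \<comment> \<open>\<open>s = 1/\<beta>\<^sup>2\<close> matches the leading orders \<open>q \<sim> \<beta>\<^sup>4/3\<close> and \<open>p \<sim> 2\<beta>\<^sup>6/9\<close>\<close>
  finally have "2 * q \<le> 3 * (1 / \<beta>^2) * p" using assms by (simp add: field_simps)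
  then have "q * y^2 \<le> p * y^3 + q * (1 / \<beta>^2)^2 / 3"
    using \<open>0 \<le> q\<close> assms by (intro cubic_lower_bound) (simp_all add: y_def)
  moreover have "q * (1 / \<beta>^2)^2 / 3 \<le> 8/9"
  proof -
    have "3 * q \<le> 8 * \<beta>^4" using q3 assms pow by linarith
    then show ?thesis using assms by (simp add: field_simps flip: power_mult_distrib)
  qed
  moreover have "(cmod (trig_poly (gbdf4_a \<beta>) t))^2 = 1 + y/6 - q * y^2 + p * y^3"
    unfolding norm_trig_poly_squared[OF length_gbdf4(1)] gbdf4_a_norm_squared y_def q_def p_def ..
  moreover have "0 \<le> y" by (simp add: y_def)
  ultimately have "(1/3)^2 \<le> (cmod (trig_poly (gbdf4_a \<beta>) t))^2" by (simp add: power2_eq_square)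
  then show ?thesis by (rule power2_le_imp_le) simp
qed

lemma gbdf4_bounds_ge_1:
  fixes \<beta> :: real
  assumes "1 \<le> \<beta>"
  shows "sigma_F (gbdf4_a \<beta>) \<ge> 1
    \<and> sigma_E (gbdf4_a \<beta>) (gbdf4_c \<beta>) \<ge>
        (4*\<beta>^3 + 18*\<beta>^2 + 20*\<beta> + 3) / (4*(\<beta>^3 + 3*\<beta>^2 + \<beta> - 1))
    \<and> lambda_I (gbdf4_a \<beta>) (gbdf4_b \<beta>) \<le>
        (4*\<beta>^3 + 6*\<beta>^2 - 4*\<beta> - 3) / (4*(\<beta>^3 + 3*\<beta>^2 + \<beta> - 1))
    \<and> I_IE (gbdf4_a \<beta>) (gbdf4_b \<beta>) (gbdf4_c \<beta>) \<le>
        (4*\<beta>^3 + 6*\<beta>^2 - 4*\<beta> - 3) / (4*\<beta>^3 + 18*\<beta>^2 + 20*\<beta> + 3)"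
proof -
  let ?A = "gbdf4_a \<beta>" and ?B = "gbdf4_b \<beta>" and ?C = "gbdf4_c \<beta>"
  define D where "D = 4*(\<beta>^3 + 3*\<beta>^2 + \<beta> - 1)"
  define N\<^sub>E where "N\<^sub>E = 4*\<beta>^3 + 18*\<beta>^2 + 20*\<beta> + 3"
  define N\<^sub>I where "N\<^sub>I = 4*\<beta>^3 + 6*\<beta>^2 - 4*\<beta> - 3"
  have pow: "\<beta> \<le> \<beta>^2" "\<beta>^2 \<le> \<beta>^3"
    using power_increasing[OF _ assms, of 1 2] power_increasing[OF _ assms, of 2 3] by simp_all
  have "0 < \<beta>^3 + 3*\<beta>^2 + \<beta> - 1" "0 < N\<^sub>E" "0 < N\<^sub>I"
    unfolding N\<^sub>E_def N\<^sub>I_def using assms pow by linarith+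
  then have pos: "0 < D" "0 < N\<^sub>E" "0 < N\<^sub>I" unfolding D_def by simp_all
  note a_ge = gbdf4_a_norm_ge[OF assms]
  have in_range: "0 \<in> {0..<2*pi}" "pi \<in> {0..<2*pi}" by simp_all
  have at_pi: "trig_poly ?A pi = of_real (D/3)" "trig_poly ?B pi = of_real (N\<^sub>I/3)"
    "trig_poly ?C pi = of_real (N\<^sub>E/3)"
    unfolding trig_poly_gbdf4_b D_def N\<^sub>E_def N\<^sub>I_def
    by (simp_all add: length_gbdf4[THEN trig_poly_pi] gbdf4_values)
  have F: "1 \<le> sigma_F ?A"
    using norm_divide_le_sigma_E[OF _ a_ge in_range(1), of "[1]"]
    by (simp add: sigma_F_eq_sigma_E trig_poly_0 gbdf4_values trig_poly_one)
  have E: "N\<^sub>E / D \<le> sigma_E ?A ?C"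
    using norm_divide_le_sigma_E[OF _ a_ge in_range(2), of ?C] pos
    by (simp add: at_pi norm_divide del: of_real_divide)
  have I: "lambda_I ?A ?B \<le> N\<^sub>I / D"
    using lambda_I_le_Re_divide[OF _ a_ge in_range(2), of ?B] pos
    by (simp add: at_pi del: of_real_divide)
  have "I_IE ?A ?B ?C \<le> (N\<^sub>I / D) / (N\<^sub>E / D)"
    using pos by (intro I_IE_le[OF I E]) simp_all
  also have "\<dots> = N\<^sub>I / N\<^sub>E" using pos by simp
  finally show ?thesis using F E I unfolding D_def N\<^sub>E_def N\<^sub>I_def by blast
qed

lemma cubic_certificate_nonneg:
  fixes y :: real
  assumes "0 \<le> y" "0 \<le> k" "0 \<le> e" "0 \<le> f" "0 \<le> g"
  shows "0 \<le> (y - r)^2 * (k * y + e) + f * y + g"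
  using assms by (intro add_nonneg_nonneg mult_nonneg_nonneg) auto

lemma gbdf4_a_9_norm_squared_ge:
  assumes "x \<le> 1"
  shows "(45/49)^2 \<le> cheb_inner (gbdf4_a 9) (gbdf4_a 9) x"
proof -
  have "cheb_inner (gbdf4_a 9) (gbdf4_a 9) x = (45/49)^2
      + (((1 - x) - 1/100)^2 * (1290233/6 * (1 - x) + 960499/900)
         + 1297/180000 * (1 - x) + 1077841901/21609000000)"
    unfolding cheb_inner_def power2_eq_square[symmetric] cos_poly_def sin_poly_def gbdf4_a_def
    by (simp add: field_simps) algebra
  moreover have "0 \<le> ((1 - x) - 1/100)^2 * (1290233/6 * (1 - x) + 960499/900)
         + 1297/180000 * (1 - x) + 1077841901/21609000000"
    using assms by (intro cubic_certificate_nonneg) simp_all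
  ultimately show ?thesis by linarith
qed

lemma gbdf4_c_9_norm_squared_le:
  assumes "x \<le> 1"
  shows "cheb_inner (gbdf4_c 9) (gbdf4_c 9) x
    \<le> (2319/1960)^2 * cheb_inner (gbdf4_a 9) (gbdf4_a 9) x"
proof -
  have "(2319/1960)^2 * cheb_inner (gbdf4_a 9) (gbdf4_a 9) x
        - cheb_inner (gbdf4_c 9) (gbdf4_c 9) x
      = ((1 - x) - 9/250)^2 * (11664803253/1097600 * (1 - x) + 190744365439/960400000)
        + 364890398853/480200000000 * (1 - x) + 8552222024441/60025000000000"
    unfolding cheb_inner_def power2_eq_square[symmetric] cos_poly_def sin_poly_def
      gbdf4_a_def gbdf4_c_def
    by (simp add: field_simps) algebra
  moreover have "0 \<le> ((1 - x) - 9/250)^2 * (11664803253/1097600 * (1 - x) + 190744365439/960400000)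
        + 364890398853/480200000000 * (1 - x) + 8552222024441/60025000000000"
    using assms by (intro cubic_certificate_nonneg) simp_all
  ultimately show ?thesis by linarith
qed

lemma gbdf4_b_9_inner_ge:
  assumes "x \<le> 1"
  shows "1641/1960 * cheb_inner (gbdf4_a 9) (gbdf4_a 9) x
    \<le> cheb_inner (butlast (gbdf4_b 9)) (gbdf4_a 9) x"
proof -
  have "cheb_inner (butlast (gbdf4_b 9)) (gbdf4_a 9) x
        - 1641/1960 * cheb_inner (gbdf4_a 9) (gbdf4_a 9) x
      = ((1 - x) - 7/200)^2 * (2533907/560 * (1 - x) + 102527129/1176000)
        + 119329309/470400000 * (1 - x) + 2632170679/47040000000"
    unfolding cheb_inner_def power2_eq_square[symmetric] cos_poly_def sin_poly_def
      gbdf4_a_def gbdf4_b_def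
    by (simp add: field_simps) algebra
  moreover have "0 \<le> ((1 - x) - 7/200)^2 * (2533907/560 * (1 - x) + 102527129/1176000)
        + 119329309/470400000 * (1 - x) + 2632170679/47040000000"
    using assms by (intro cubic_certificate_nonneg) simp_all
  ultimately show ?thesis by linarith
qed

lemma gbdf4_bounds_9:
  "sigma_F (gbdf4_a 9) \<le> 49/45
    \<and> sigma_E (gbdf4_a 9) (gbdf4_c 9) \<le> 2319/1960
    \<and> lambda_I (gbdf4_a 9) (gbdf4_b 9) \<ge> 1641/1960
    \<and> I_IE (gbdf4_a 9) (gbdf4_b 9) (gbdf4_c 9) \<ge> 547/773"
proof -
  let ?A = "gbdf4_a 9" and ?B = "gbdf4_b 9" and ?C = "gbdf4_c 9"
  note norm_sq = length_gbdf4[THEN norm_trig_poly_squared]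
  have a_ge: "45/49 \<le> cmod (trig_poly ?A t)" for t
    using gbdf4_a_9_norm_squared_ge[OF cos_le_one[of t]] unfolding norm_sq(1)[symmetric]
    by (rule power2_le_imp_le) simp
  have a_pos: "0 < cmod (trig_poly ?A t)" for t
    using a_ge[of t] by linarith
  have F: "sigma_F ?A \<le> 49/45"
    unfolding sigma_F_eq_sigma_E
  proof (rule sigma_E_le)
    fix \<theta>
    show "cmod (trig_poly [1] \<theta> / trig_poly ?A \<theta>) \<le> 49/45"
      using a_ge[of \<theta>] a_pos[of \<theta>] by (simp add: trig_poly_one norm_divide pos_divide_le_eq)
  qed
  have E: "sigma_E ?A ?C \<le> 2319/1960"
  proof (rule sigma_E_le)
    fix \<theta>
    have "(cmod (trig_poly ?C \<theta>))^2 \<le> (2319/1960 * cmod (trig_poly ?A \<theta>))^2"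
      unfolding power_mult_distrib norm_sq by (rule gbdf4_c_9_norm_squared_le[OF cos_le_one])
    then have "cmod (trig_poly ?C \<theta>) \<le> 2319/1960 * cmod (trig_poly ?A \<theta>)"
      by (rule power2_le_imp_le) simp
    then show "cmod (trig_poly ?C \<theta> / trig_poly ?A \<theta>) \<le> 2319/1960"
      using a_pos[of \<theta>] by (simp add: norm_divide pos_divide_le_eq)
  qed
  have I: "1641/1960 \<le> lambda_I ?A ?B"
  proof (rule lambda_I_ge)
    fix \<theta>
    have "1641/1960 * (cmod (trig_poly ?A \<theta>))^2 \<le> cheb_inner (butlast ?B) ?A (cos \<theta>)"
      using gbdf4_b_9_inner_ge[OF cos_le_one[of \<theta>]] by (simp add: norm_sq)
    then show "1641/1960 \<le> Re (trig_poly ?B \<theta> / trig_poly ?A \<theta>)"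
      unfolding trig_poly_gbdf4_b Re_trig_poly_divide[OF length_gbdf4(1,2)]
      using a_pos[of \<theta>] by (simp add: pos_le_divide_eq)
  qed
  have "0 < sigma_E ?A ?C"
    using gbdf4_bounds_ge_1[of 9] by simp
  then have "(1641/1960) / (2319/1960) \<le> I_IE ?A ?B ?C"
    using I E by (intro I_IE_ge) simp_all
  then show ?thesis using F E I by simp
qed

theorem mainTheorem8:
  shows "(\<forall>\<beta>::real. \<beta> \<ge> 1 \<longrightarrow>
            sigma_F (gbdf4_a \<beta>) \<ge> 1
          \<and> sigma_E (gbdf4_a \<beta>) (gbdf4_c \<beta>) \<ge>
              (4*\<beta>^3 + 18*\<beta>^2 + 20*\<beta> + 3) / (4*(\<beta>^3 + 3*\<beta>^2 + \<beta> - 1))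
          \<and> lambda_I (gbdf4_a \<beta>) (gbdf4_b \<beta>) \<le>
              (4*\<beta>^3 + 6*\<beta>^2 - 4*\<beta> - 3) / (4*(\<beta>^3 + 3*\<beta>^2 + \<beta> - 1))
          \<and> I_IE (gbdf4_a \<beta>) (gbdf4_b \<beta>) (gbdf4_c \<beta>) \<le>
              (4*\<beta>^3 + 6*\<beta>^2 - 4*\<beta> - 3) / (4*\<beta>^3 + 18*\<beta>^2 + 20*\<beta> + 3))
       \<and> (sigma_F (gbdf4_a 9) \<le> 49/45
          \<and> sigma_E (gbdf4_a 9) (gbdf4_c 9) \<le> 2319/1960
          \<and> lambda_I (gbdf4_a 9) (gbdf4_b 9) \<ge> 1641/1960
          \<and> I_IE (gbdf4_a 9) (gbdf4_b 9) (gbdf4_c 9) \<ge> 547/773)"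
  using gbdf4_bounds_ge_1 gbdf4_bounds_9 by blast

end
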